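(* Let $h\ge 2$ be an integer and $\lambda_G,\lambda_L,\gamma>0$. Let $S=\{(a,b): a\ge 1,\ b\ge 1,\ a+b\le h\}\cup\{(0,1)^\ast\}$ and let $\mathbf{P}=(p_{s,t})_{s,t\in S}$, $\Phi=(\phi_{s,t})_{s,t\in S}$ be the matrices whose only non-zero entries are as follows: for $(a,b)\in S$ with $a\ge 1$, $p_{(a,b),(a-1,b+1)}=\frac{a\lambda_L}{a\lambda_L+\gamma}$ and $\phi_{(a,b),(a-1,b+1)}=\frac{a\lambda_L}{b(a\lambda_L+\gamma)}$ if $a>1$; $p_{(1,b),(0,1)^\ast}=\frac{\lambda_L}{\lambda_L+\gamma}$ and $\phi_{(1,b),(0,1)^\ast}=\frac{\lambda_L}{b(\lambda_L+\gamma)}$; $p_{(a,b),(a,b-1)}=\frac{(b-1)\gamma}{b(a\lambda_L+\gamma)}$ if $b\ge 2$; $\phi_{(a,b),(h-1,1)}=\frac{\lambda_G}{b(a\lambda_L+\gamma)}$; and $\phi_{(0,1)^\ast,(h-1,1)}=\lambda_G/\gamma$ (the row of $\mathbf{P}$ indexed by $(0,1)^\ast$ is zero). Let $\mathbf{M}=(\mathbf{I}-\mathbf{P})^{-1}\Phi$ and $\mu_G=\lambda_G/\gamma$. Let $\mathbf{y}^{(0)}$ be the row vector indexed by $S$ with $y^{(0)}_{(h-1,1)}=1$ and all other entries $0$, and for $n\ge 1$ let $\mathbf{y}^{(n)}=\mathbf{y}^{(n-1)}\mathbf{M}=\mathbf{y}^{(0)}\mathbf{M}^n$ (the vector of mean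 numbers of infectives of each type in generation $n$ of the epidemic). For $i=0,\ldots,h-1$ let $\mu_i$ be the mean number of infectives in generation $i$ of the single-household epidemic described in the context. Define $x_{n,i}$ ($n\ge 0$, $0\le i\le h-1$) by $x_{0,0}=1$, $x_{0,i}=0$ for $i\ge 1$, and for $n\ge 1$: $x_{n,0}=\mu_G\sum_{i=0}^{h-1}x_{n-1,i}$ and $x_{n,i}=\mu_i x_{n-i,0}$ for $1\le i\le h-1$ (with $x_{m,0}=0$ for $m<0$). Then for all $n=0,1,2,\ldots$, $$y^{(n)}_{(h-1,1)}=x_{n,0},$$ and, writing $y_n=\sum_{s\in S}y^{(n)}_s$ and $x_n=\sum_{j=0}^{h-1}x_{n,j}$, we have $y_n=x_n$.
   Context: Single-household Markovian SIR epidemic: a household of $h$ individuals initially contains one infective and $h-1$ susceptibles. Each infective remains infectious for an exponentially distributed time with rate $\gamma$ (independently), during which it makes contacts with each other given household member at the points of independent homogeneous Poisson processes of rate $\lambda_L$; a contacted susceptible immediately becomes infectious. Generations: the initial infective is in generation $0$, and an individual infected by an infective of generation $i-1$ is in generation $i$. In the full household model, each infective additionally makes global contacts at rate $\lambda_G$, each creating a new infectious household in state $(h-1,1)$; a state $(a,b)$ denotes a household with $a$ susceptibles and $b$ infectives, and states with no susceptibles are amalgamated into $(0,1)^\ast$. $\mathbf{M}$ is the mean reproduction matrix: $m_{s,t}$ is the mean number of type-$t$ infectives generated by an individual infected as a member of a type-$s$ infectious unit. The quantity $x_{n,i}$ is the mean number of individuals in generation $n$ of the epidemic who belong to generation $i$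 of their household epidemic. *)

theory Defs
  imports Complex_Main
begin

text \<open>State of the household epidemic (embedded jump chain of the continuous-time
Markov chain): s = number of susceptibles, c = list whose j-th entry is the number of
current infectives belonging to household generation j.  Each infective of generation j
infects each susceptible at rate lL (the new infective has generation j+1) and recovers
at rate g.  genF lL g i s c is the expected number of further infections that produce an
individual of household generation i, starting from state (s,c).\<close>

lemma sum_list_upd_inc: "sum_list (c[k := c ! k + 1]) \<le> sum_list c + (1::nat)"
proof (cases "k < length c")
  case True then show ?thesis by (simp add: sum_list_update)
next
  case False then show ?thesis by (simp add: list_update_beyond)
qed

lemma sum_list_upd_dec: "j < length c \<Longrightarrow> 0 < c ! j \<Longrightarrow>
    sum_list (c[j := c ! j - 1]) < sum_list (c::nat list)"
  using elem_le_sum_list[of j c] by (simp add: sum_list_update)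

function genF :: "real \<Rightarrow> real \<Rightarrow> nat \<Rightarrow> nat \<Rightarrow> nat list \<Rightarrow> real" where
  "genF lL g i s c =
    (if sum_list c = 0 then 0 else
      (let R = real (sum_list c) * (lL * real s + g) in
        (\<Sum>j<length c. (real (c ! j) * lL * real s / R) *
            ((if Suc j = i then 1 else 0) +
             (if 0 < s \<and> 0 < c ! j then genF lL g i (s - 1) (c[Suc j := c ! Suc j + 1]) else 0)))
      + (\<Sum>j<length c. (real (c ! j) * g / R) *
            (if 0 < c ! j then genF lL g i s (c[j := c ! j - 1]) else 0))))"
  by pat_completeness auto
termination
proof (relation "measure (\<lambda>(lL, g, i, s, c). 2 * s + sum_list c)")
  show "wf (measure (\<lambda>(lL, g, i, s, c). 2 * s + sum_list c))" by simp
next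
  fix lL g :: real and i s :: nat and c :: "nat list" and x j
  assume "0 < s \<and> 0 < c ! j"
  then show "((lL, g, i, s - 1, c[Suc j := c ! Suc j + 1]), lL, g, i, s, c)
      \<in> measure (\<lambda>(lL, g, i, s, c). 2 * s + sum_list c)"
    using sum_list_upd_inc[of c "Suc j"] by (simp, linarith)
next
  fix lL g :: real and i s :: nat and c :: "nat list" and x j
  assume "j \<in> {..<length c}" "0 < c ! j"
  then show "((lL, g, i, s, c[j := c ! j - 1]), lL, g, i, s, c)
      \<in> measure (\<lambda>(lL, g, i, s, c). 2 * s + sum_list c)"
    using sum_list_upd_dec[of j c] by simp
qed

definition mu :: "real \<Rightarrow> real \<Rightarrow> nat \<Rightarrow> nat \<Rightarrow> real" where
  "mu lL g h i = (if i = 0 then 1 else genF lL g i (h - 1) (1 # replicate (h - 1) 0))"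

text \<open>Some (a,b) is the state (a,b); None is the amalgamated state (0,1)*.\<close>
definition typesS :: "nat \<Rightarrow> (nat \<times> nat) option set" where
  "typesS h = {Some (a, b) | a b. 1 \<le> a \<and> 1 \<le> b \<and> a + b \<le> h} \<union> {None}"

definition Pmat :: "real \<Rightarrow> real \<Rightarrow> (nat \<times> nat) option \<Rightarrow> (nat \<times> nat) option \<Rightarrow> real" where
  "Pmat lL g s t = (case s of None \<Rightarrow> 0
     | Some (a, b) \<Rightarrow>
        (if 1 < a \<and> t = Some (a - 1, b + 1) then real a * lL / (real a * lL + g) else 0)
      + (if a = 1 \<and> t = None then lL / (lL + g) else 0)
      + (if 2 \<le> b \<and> t = Some (a, b - 1)
           then (real b - 1) * g / (real b * (real a * lL + g)) else 0))"

definition Phimat :: "nat \<Rightarrow> real \<Rightarrow> real \<Rightarrow> real \<Rightarrow> (nat \<times> nat) option \<Rightarrow> (nat \<times> nat) option \<Rightarrow> real" where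
  "Phimat h lG lL g s t = (case s of
       None \<Rightarrow> (if t = Some (h - 1, 1) then lG / g else 0)
     | Some (a, b) \<Rightarrow>
        (if 1 < a \<and> t = Some (a - 1, b + 1) then real a * lL / (real b * (real a * lL + g)) else 0)
      + (if a = 1 \<and> t = None then lL / (real b * (lL + g)) else 0)
      + (if t = Some (h - 1, 1) then lG / (real b * (real a * lL + g)) else 0))"

definition matmul :: "'a set \<Rightarrow> ('a \<Rightarrow> 'a \<Rightarrow> real) \<Rightarrow> ('a \<Rightarrow> 'a \<Rightarrow> real) \<Rightarrow> 'a \<Rightarrow> 'a \<Rightarrow> real" where
  "matmul S A B = (\<lambda>s t. \<Sum>u\<in>S. A s u * B u t)"

definition idmat :: "'a \<Rightarrow> 'a \<Rightarrow> real" where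
  "idmat = (\<lambda>s t. if s = t then 1 else 0)"

definition matinv :: "'a set \<Rightarrow> ('a \<Rightarrow> 'a \<Rightarrow> real) \<Rightarrow> 'a \<Rightarrow> 'a \<Rightarrow> real" where
  "matinv S A = (THE B. (\<forall>s\<in>S. \<forall>t\<in>S. matmul S A B s t = idmat s t \<and> matmul S B A s t = idmat s t)
                       \<and> (\<forall>s t. s \<notin> S \<or> t \<notin> S \<longrightarrow> B s t = 0))"

definition Mmat :: "nat \<Rightarrow> real \<Rightarrow> real \<Rightarrow> real \<Rightarrow> (nat \<times> nat) option \<Rightarrow> (nat \<times> nat) option \<Rightarrow> real" where
  "Mmat h lG lL g = matmul (typesS h)
      (matinv (typesS h) (\<lambda>s t. idmat s t - Pmat lL g s t)) (Phimat h lG lL g)"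

fun yvec :: "nat \<Rightarrow> real \<Rightarrow> real \<Rightarrow> real \<Rightarrow> nat \<Rightarrow> (nat \<times> nat) option \<Rightarrow> real" where
  "yvec h lG lL g 0 = (\<lambda>t. if t = Some (h - 1, 1) then 1 else 0)"
| "yvec h lG lL g (Suc n) = (\<lambda>t. \<Sum>s\<in>typesS h. yvec h lG lL g n s * Mmat h lG lL g s t)"

text \<open>The recursion x_{n,i}; muG = lG/g, muf i = mu_i.  Values for i >= h are set to 0.\<close>
function xgen :: "nat \<Rightarrow> real \<Rightarrow> (nat \<Rightarrow> real) \<Rightarrow> nat \<Rightarrow> nat \<Rightarrow> real" where
  "xgen h muG muf n i =
     (if n = 0 then (if i = 0 then 1 else 0)
      else if i = 0 then muG * (\<Sum>k<h. xgen h muG muf (n - 1) k)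
      else if i < h \<and> i \<le> n then muf i * xgen h muG muf (n - i) 0
      else 0)"
  by pat_completeness auto
termination
  by (relation "measure (\<lambda>(h, muG, muf, n, i). n)") auto

end

(* The global contacts enter M only through the column of the fresh household type
   e = (h-1,1), and that column of Phi is mu_G times (I - P) 1: each row of I - P sums to the
   probability that a given infective recovers before the next event in its unit. Hence
   M = L + mu_G 1 e^T, where L = (I - P)^-1 Phi_L is the within-household part; its e-column
   vanishes, since a local infection never produces a unit with a single infective. Induction on
   n gives y^(n) = sum_i x_{n-i,0} e^T L^i, so y^(n)_e = x_{n,0} and the total is
   sum_i x_{n-i,0} D_i(e), where D_i(x) is the row sum of L^i at x. Finally D_i(e) = mu_i:
   by first-step analysis, the household generation means genF and the row sums of the powers
   of L satisfy the same recursion over household states. *)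

theory Submission
  imports Defs
begin

declare genF.simps [simp del] xgen.simps [simp del]

section \<open>Matrices indexed by a finite set\<close>

lemma matmul_assoc:
  assumes "finite S"
  shows "matmul S (matmul S A B) C = matmul S A (matmul S B C)"
  unfolding matmul_def
  by (intro ext) (simp add: sum_distrib_left sum_distrib_right mult.assoc, rule sum.swap)

lemma matmul_idmat_left: "s \<in> S \<Longrightarrow> finite S \<Longrightarrow> matmul S idmat B s t = B s t"
  by (simp add: matmul_def idmat_def if_distrib[of "\<lambda>x. x * _"] cong: if_cong)

lemma matmul_idmat_right: "t \<in> S \<Longrightarrow> finite S \<Longrightarrow> matmul S A idmat s t = A s t"
  by (simp add: matmul_def idmat_def if_distrib[of "\<lambda>x. _ * x"] cong: if_cong)

lemma sum_idmat: "s \<in> S \<Longrightarrow> finite S \<Longrightarrow> (\<Sum>t\<in>S. idmat s t) = 1"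
  by (simp add: idmat_def)

lemma matmul_I_minus_left:
  assumes "s \<in> S" "finite S"
  shows "matmul S (\<lambda>s t. idmat s t - P s t) B s t = B s t - matmul S P B s t"
  using matmul_idmat_left[OF assms, of B t]
  by (simp add: matmul_def left_diff_distrib sum_subtractf)

lemma matmul_I_minus_right:
  assumes "t \<in> S" "finite S"
  shows "matmul S B (\<lambda>s t. idmat s t - P s t) s t = B s t - matmul S B P s t"
  using matmul_idmat_right[OF assms, of B s]
  by (simp add: matmul_def right_diff_distrib sum_subtractf)

primrec matpow :: "'a set \<Rightarrow> ('a \<Rightarrow> 'a \<Rightarrow> real) \<Rightarrow> nat \<Rightarrow> 'a \<Rightarrow> 'a \<Rightarrow> real" where
  "matpow S P 0 = idmat"
| "matpow S P (Suc k) = matmul S P (matpow S P k)"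

lemma matpow_Suc_right:
  assumes "finite S" "s \<in> S" "t \<in> S"
  shows "matpow S P (Suc k) s t = matmul S (matpow S P k) P s t"
  using assms(2,3)
proof (induction k arbitrary: s t)
  case 0
  then show ?case using assms(1) by (simp add: matmul_idmat_left matmul_idmat_right)
next
  case (Suc k)
  have "matmul S (matpow S P (Suc k)) P s t = matmul S P (matmul S (matpow S P k) P) s t"
    by (simp add: matmul_assoc[OF assms(1)])
  also have "\<dots> = matpow S P (Suc (Suc k)) s t"
    using Suc.IH[OF _ Suc.prems(2)] by (simp add: matmul_def)
  finally show ?case by simp
qed

lemma matpow_rank_decrease:
  assumes rank: "\<And>s t. s \<in> S \<Longrightarrow> t \<in> S \<Longrightarrow> P s t \<noteq> 0 \<Longrightarrow> r t < (r s :: nat)"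
  shows "s \<in> S \<Longrightarrow> matpow S P k s t \<noteq> 0 \<Longrightarrow> r t + k \<le> r s"
proof (induction k arbitrary: s)
  case 0
  then show ?case by (simp add: idmat_def split: if_splits)
next
  case (Suc k)
  then obtain u where "u \<in> S" "P s u * matpow S P k u t \<noteq> 0"
    by (auto simp: matmul_def elim: sum.not_neutral_contains_not_neutral)
  with rank[OF Suc.prems(1)] Suc.IH show ?case by fastforce
qed

definition inverse_on :: "'a set \<Rightarrow> ('a \<Rightarrow> 'a \<Rightarrow> real) \<Rightarrow> ('a \<Rightarrow> 'a \<Rightarrow> real) \<Rightarrow> bool" where
  "inverse_on S A B \<longleftrightarrow>
     (\<forall>s\<in>S. \<forall>t\<in>S. matmul S A B s t = idmat s t \<and> matmul S B A s t = idmat s t)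
   \<and> (\<forall>s t. s \<notin> S \<or> t \<notin> S \<longrightarrow> B s t = 0)"

lemma inverse_on_unique:
  assumes "finite S" "inverse_on S A B" "inverse_on S A B'"
  shows "B = B'"
proof (intro ext)
  fix s t
  show "B s t = B' s t"
  proof (cases "s \<in> S \<and> t \<in> S")
    case True
    have "B' s t = matmul S (matmul S B A) B' s t"
      using True assms(2) matmul_idmat_left[of s S B' t] \<open>finite S\<close>
      by (simp add: inverse_on_def matmul_def)
    also have "\<dots> = matmul S B (matmul S A B') s t"
      by (simp add: matmul_assoc[OF \<open>finite S\<close>])
    also have "\<dots> = B s t"
      using True assms(3) matmul_idmat_right[of t S B s] \<open>finite S\<close>
      by (simp add: inverse_on_def matmul_def)
    finally show ?thesis by simp
  next
    case False
    then show ?thesis using assms(2,3) by (auto simp: inverse_on_def)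
  qed
qed

lemma matinv_eqI: "finite S \<Longrightarrow> inverse_on S A B \<Longrightarrow> matinv S A = B"
  unfolding matinv_def inverse_on_def[symmetric]
  by (rule the_equality) (auto intro: inverse_on_unique)

lemma inverse_on_I_minus_nilpotent:
  assumes "finite S" and nilpotent: "\<And>s t. s \<in> S \<Longrightarrow> t \<in> S \<Longrightarrow> matpow S P N s t = 0"
  defines "Q \<equiv> \<lambda>s t. if s \<in> S \<and> t \<in> S then \<Sum>k<N. matpow S P k s t else 0"
  shows "inverse_on S (\<lambda>s t. idmat s t - P s t) Q"
proof -
  have telescope: "Q s t - (\<Sum>k<N. matpow S P (Suc k) s t) = idmat s t"
    if "s \<in> S" "t \<in> S" for s t
    using that nilpotent sum_lessThan_telescope'[of "\<lambda>k. matpow S P k s t" N]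
    by (simp add: Q_def sum_subtractf del: matpow.simps(2))
  have "matmul S P Q s t = (\<Sum>k<N. matpow S P (Suc k) s t)" if "t \<in> S" for s t
  proof -
    have "matmul S P Q s t = (\<Sum>u\<in>S. P s u * (\<Sum>k<N. matpow S P k u t))"
      unfolding matmul_def Q_def using that by (intro sum.cong) auto
    also have "\<dots> = (\<Sum>k<N. \<Sum>u\<in>S. P s u * matpow S P k u t)"
      by (simp add: sum_distrib_left, rule sum.swap)
    finally show ?thesis by (simp add: matmul_def)
  qed
  moreover have "matmul S Q P s t = (\<Sum>k<N. matpow S P (Suc k) s t)" if "s \<in> S" "t \<in> S" for s t
  proof -
    have "matmul S Q P s t = (\<Sum>u\<in>S. (\<Sum>k<N. matpow S P k s u) * P u t)"
      unfolding matmul_def Q_def using that by (intro sum.cong) auto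
    also have "\<dots> = (\<Sum>k<N. \<Sum>u\<in>S. matpow S P k s u * P u t)"
      by (simp add: sum_distrib_right, rule sum.swap)
    finally show ?thesis
      using that by (simp add: matmul_def matpow_Suc_right[OF \<open>finite S\<close>] del: matpow.simps(2))
  qed
  ultimately show ?thesis
    using telescope \<open>finite S\<close>
    by (simp add: inverse_on_def Q_def matmul_I_minus_left matmul_I_minus_right)
qed

section \<open>Mean generation sizes in a single household\<close>

lemma sum_list_update_weighted:
  assumes "k < length c"
  shows "(\<Sum>m<length c. real (c[k := v] ! m) * f m) =
         (\<Sum>m<length c. real (c ! m) * f m) + (real v - real (c ! k)) * f k"
proof -
  have "(\<Sum>m<length c. real (c[k := v] ! m) * f m) =
        (\<Sum>m<length c. real (c ! m) * f m + (if m = k then (real v - real (c ! k)) * f k else 0))"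
    by (intro sum.cong) (auto simp: nth_list_update algebra_simps)
  then show ?thesis using assms by (simp add: sum.distrib)
qed

definition genF_step ::
    "real \<Rightarrow> real \<Rightarrow> nat \<Rightarrow> (nat \<Rightarrow> nat list \<Rightarrow> real) \<Rightarrow> nat \<Rightarrow> nat list \<Rightarrow> real" where
  "genF_step lL g i F s c =
    (let R = real (sum_list c) * (lL * real s + g) in
      (\<Sum>j<length c. real (c ! j) * lL * real s / R *
          ((if Suc j = i then 1 else 0) +
           (if 0 < s \<and> 0 < c ! j then F (s - 1) (c[Suc j := c ! Suc j + 1]) else 0)))
    + (\<Sum>j<length c. real (c ! j) * g / R * (if 0 < c ! j then F s (c[j := c ! j - 1]) else 0)))"

lemma genF_eq_genF_step: "sum_list c \<noteq> 0 \<Longrightarrow> genF lL g i s c = genF_step lL g i (genF lL g i) s c"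
  unfolding genF_step_def by (subst genF.simps) (simp only: if_False)

lemma genF_step_cong:
  assumes "\<And>j. j < length c \<Longrightarrow> 0 < s \<Longrightarrow> 0 < c ! j \<Longrightarrow>
      F (s - 1) (c[Suc j := c ! Suc j + 1]) = G (s - 1) (c[Suc j := c ! Suc j + 1])"
    and "\<And>j. j < length c \<Longrightarrow> 0 < c ! j \<Longrightarrow> F s (c[j := c ! j - 1]) = G s (c[j := c ! j - 1])"
  shows "genF_step lL g i F s c = genF_step lL g i G s c"
  unfolding genF_step_def Let_def using assms by (intro arg_cong2[where f = "(+)"] sum.cong) auto

(* The first conjunct keeps the index Suc j written by an infection inside the list:
   list_update beyond the length would silently do nothing. *)
definition admissible_state :: "nat \<Rightarrow> nat \<Rightarrow> nat list \<Rightarrow> bool" where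
  "admissible_state h s c \<longleftrightarrow>
     (\<forall>j<length c. 0 < c ! j \<longrightarrow> s + j < length c) \<and> s + sum_list c \<le> h"

lemma admissible_state_infect:
  assumes "admissible_state h s c" "j < length c" "0 < c ! j" "0 < s"
  shows "Suc j < length c"
    and "sum_list (c[Suc j := c ! Suc j + 1]) = sum_list c + 1"
    and "admissible_state h (s - 1) (c[Suc j := c ! Suc j + 1])"
proof -
  show "Suc j < length c" using assms by (auto simp: admissible_state_def)
  then show sum: "sum_list (c[Suc j := c ! Suc j + 1]) = sum_list c + 1"
    by (simp add: sum_list_update)
  have "s - 1 + m < length c" if "m < length c" "0 < c[Suc j := c ! Suc j + 1] ! m" for m
    using assms that by (cases "m = Suc j") (auto simp: admissible_state_def)
  then show "admissible_state h (s - 1) (c[Suc j := c ! Suc j + 1])"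
    using assms sum by (auto simp: admissible_state_def)
qed

lemma admissible_state_recover:
  assumes "admissible_state h s c" "j < length c" "0 < c ! j"
  shows "sum_list (c[j := c ! j - 1]) = sum_list c - 1"
    and "admissible_state h s (c[j := c ! j - 1])"
proof -
  show sum: "sum_list (c[j := c ! j - 1]) = sum_list c - 1"
    using assms(2,3) elem_le_sum_list[of j c] by (simp add: sum_list_update)
  show "admissible_state h s (c[j := c ! j - 1])"
    using assms sum by (auto simp: admissible_state_def nth_list_update split: if_splits)
qed

lemma sum_first_step_rearrange:
  fixes c d1 d2 e :: "nat \<Rightarrow> real"
  assumes B: "B = (\<Sum>m<n. c m)"
    and S1: "S1 = (\<Sum>m<n. c m * d1 m)" and S2: "S2 = (\<Sum>m<n. c m * d2 m)"
  shows "(\<Sum>j<n. c j * (a1 * (S1 + e j) + a2 * (S2 - d2 j)))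
       = (\<Sum>m<n. c m * (a1 * B * d1 m + a1 * e m + a2 * (B - 1) * d2 m))"
proof -
  have "(\<Sum>j<n. c j * (a1 * (S1 + e j) + a2 * (S2 - d2 j)))
      = a1 * S1 * (\<Sum>j<n. c j) + a1 * (\<Sum>j<n. c j * e j)
        + a2 * S2 * (\<Sum>j<n. c j) - a2 * (\<Sum>j<n. c j * d2 j)"
    by (simp add: algebra_simps sum.distrib sum_subtractf sum_distrib_left)
  also have "\<dots> = (\<Sum>m<n. c m * (a1 * B * d1 m + a1 * e m + a2 * (B - 1) * d2 m))"
    unfolding B S1 S2 by (simp add: algebra_simps sum.distrib sum_subtractf sum_distrib_left)
  finally show ?thesis .
qed

(* D k s b: mean number of infectives k household generations below a given one of the b
   infectives of a household with s susceptibles.  D_Suc is first-step analysis: the next event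
   is an infection by the given infective (its child then contributes D k), an infection by
   another one, or the recovery of another one; its own recovery ends its contribution. *)
locale household_generation_means =
  fixes lL g :: real and h :: nat and D :: "nat \<Rightarrow> nat \<Rightarrow> nat \<Rightarrow> real"
  assumes D_0: "1 \<le> b \<Longrightarrow> s + b \<le> h \<Longrightarrow> D 0 s b = 1"
    and D_Suc_no_susceptibles: "D (Suc k) 0 b = 0"
    and D_Suc: "1 \<le> s \<Longrightarrow> 1 \<le> b \<Longrightarrow> s + b \<le> h \<Longrightarrow>
      D (Suc k) s b =
          real s * lL / (real s * lL + g) * D (Suc k) (s - 1) (b + 1)
        + real s * lL / (real b * (real s * lL + g)) * D k (s - 1) (b + 1)
        + (real b - 1) * g / (real b * (real s * lL + g)) * D (Suc k) s (b - 1)"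
begin

lemma D_eq_0_if_few_susceptibles: "s < k \<Longrightarrow> 1 \<le> b \<Longrightarrow> s + b \<le> h \<Longrightarrow> D k s b = 0"
proof (induction "2 * s + b" arbitrary: s b k rule: less_induct)
  case less
  then obtain k' where k: "k = Suc k'" by (cases k) auto
  show ?case
  proof (cases "s = 0")
    case True
    then show ?thesis using k D_Suc_no_susceptibles by simp
  next
    case False
    have "D (Suc k') (s - 1) (b + 1) = 0" "D k' (s - 1) (b + 1) = 0"
      using less False k by simp_all
    then have "D k s b = (real b - 1) * g / (real b * (real s * lL + g)) * D (Suc k') s (b - 1)"
      using D_Suc[of s b k'] False less.prems k by simp
    moreover have "b \<noteq> 1 \<Longrightarrow> D (Suc k') s (b - 1) = 0"
      using less k by simp
    ultimately show ?thesis by (cases "b = 1") simp_all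
  qed
qed

definition Dgen :: "nat \<Rightarrow> nat \<Rightarrow> nat \<Rightarrow> nat \<Rightarrow> real" where
  "Dgen i s b m = (if m < i then D (i - m) s b else 0)"

lemma Dgen_first_step:
  assumes "1 \<le> b" "s + b \<le> h"
  defines "R \<equiv> real b * (lL * real s + g)"
  shows "lL * real s / R * real b * Dgen i (s - 1) (b + 1) m
       + lL * real s / R * ((if Suc m = i then 1 else 0) + Dgen i (s - 1) (b + 1) (Suc m))
       + g / R * (real b - 1) * Dgen i s (b - 1) m
     = Dgen i s b m"
proof (cases "m < i")
  case False
  then show ?thesis by (simp add: Dgen_def)
next
  case True
  define k where "k = i - Suc m"
  then have k: "i - m = Suc k" using True by simp
  show ?thesis
  proof (cases "s = 0")
    case True
    then show ?thesis using k by (simp add: Dgen_def D_Suc_no_susceptibles)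
  next
    case False
    have "(if Suc m = i then 1 else 0) + Dgen i (s - 1) (b + 1) (Suc m) = D k (s - 1) (b + 1)"
      using k_def \<open>m < i\<close> False assms D_0[of "b + 1" "s - 1"] by (auto simp: Dgen_def)
    moreover have "lL * real s / R * real b = real s * lL / (real s * lL + g)"
      using assms(1) by (simp add: R_def mult.commute)
    ultimately show ?thesis
      using D_Suc[of s b k] False assms k \<open>m < i\<close>
      by (simp add: Dgen_def R_def mult.commute mult.left_commute)
  qed
qed

definition genD :: "nat \<Rightarrow> nat \<Rightarrow> nat list \<Rightarrow> real" where
  "genD i s c = (\<Sum>m<length c. real (c ! m) * Dgen i s (sum_list c) m)"

lemma genD_infect:
  assumes "admissible_state h s c" "j < length c" "0 < c ! j" "0 < s"
  shows "genD i (s - 1) (c[Suc j := c ! Suc j + 1]) =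
    (\<Sum>m<length c. real (c ! m) * Dgen i (s - 1) (sum_list c + 1) m)
      + Dgen i (s - 1) (sum_list c + 1) (Suc j)"
  using admissible_state_infect[OF assms]
  by (simp add: genD_def sum_list_update_weighted)

lemma genD_recover:
  assumes "admissible_state h s c" "j < length c" "0 < c ! j"
  shows "genD i s (c[j := c ! j - 1]) =
    (\<Sum>m<length c. real (c ! m) * Dgen i s (sum_list c - 1) m) - Dgen i s (sum_list c - 1) j"
  using admissible_state_recover[OF assms] assms(2,3)
  by (simp add: genD_def sum_list_update_weighted of_nat_diff)

lemma genD_first_step:
  assumes "admissible_state h s c" "sum_list c \<noteq> 0"
  shows "genD i s c = genF_step lL g i (genD i) s c"
proof -
  define B n where "B = sum_list c" and "n = length c"
  define R where "R = real B * (lL * real s + g)"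
  define d1 d2 where "d1 = Dgen i (s - 1) (B + 1)" and "d2 = Dgen i s (B - 1)"
  define S1 S2 where "S1 = (\<Sum>m<n. real (c ! m) * d1 m)" and "S2 = (\<Sum>m<n. real (c ! m) * d2 m)"
  define e where "e j = (if Suc j = i then 1 else 0) + d1 (Suc j)" for j
  have "genF_step lL g i (genD i) s c
      = (\<Sum>j<n. real (c ! j) * (lL * real s / R * (S1 + e j) + g / R * (S2 - d2 j)))"
    unfolding genF_step_def Let_def B_def[symmetric] n_def[symmetric] R_def[symmetric]
      sum.distrib[symmetric]
  proof (intro sum.cong refl)
    fix j assume "j \<in> {..<n}"
    show "real (c ! j) * lL * real s / R *
          ((if Suc j = i then 1 else 0) +
           (if 0 < s \<and> 0 < c ! j then genD i (s - 1) (c[Suc j := c ! Suc j + 1]) else 0))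
        + real (c ! j) * g / R * (if 0 < c ! j then genD i s (c[j := c ! j - 1]) else 0)
        = real (c ! j) * (lL * real s / R * (S1 + e j) + g / R * (S2 - d2 j))"
    proof (cases "c ! j = 0")
      case False
      with \<open>j \<in> {..<n}\<close> have ih:
        "(if 0 < s \<and> 0 < c ! j then genD i (s - 1) (c[Suc j := c ! Suc j + 1]) else 0)
           = (if 0 < s then S1 + d1 (Suc j) else 0)"
        "(if 0 < c ! j then genD i s (c[j := c ! j - 1]) else 0) = S2 - d2 j"
        using genD_infect[OF assms(1), of j i] genD_recover[OF assms(1), of j i]
        by (simp_all add: n_def B_def S1_def S2_def d1_def d2_def)
      show ?thesis unfolding ih
        by (cases "s = 0")
          (simp_all add: e_def algebra_simps add_divide_distrib diff_divide_distrib)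
    qed simp
  qed
  also have "\<dots> = (\<Sum>m<n. real (c ! m) * (lL * real s / R * real B * d1 m
      + lL * real s / R * e m + g / R * (real B - 1) * d2 m))"
    by (rule sum_first_step_rearrange)
      (simp_all add: B_def n_def S1_def S2_def sum_list_sum_nth atLeast0LessThan)
  also have "\<dots> = genD i s c"
  proof -
    have "1 \<le> B" "s + B \<le> h"
      using assms by (simp_all add: admissible_state_def B_def[symmetric])
    show ?thesis
      unfolding genD_def B_def[symmetric] n_def[symmetric] d1_def d2_def e_def R_def
        Dgen_first_step[OF \<open>1 \<le> B\<close> \<open>s + B \<le> h\<close>] ..
  qed
  finally show ?thesis by simp
qed

lemma genF_eq_genD: "admissible_state h s c \<Longrightarrow> genF lL g i s c = genD i s c"
proof (induction "2 * s + sum_list c" arbitrary: s c rule: less_induct)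
  case less
  show ?case
  proof (cases "sum_list c = 0")
    case True
    then have "genF lL g i s c = 0" "\<forall>m<length c. c ! m = 0"
      by (auto simp: sum_list_eq_0_iff genF.simps[of lL g i s c])
    then show ?thesis by (simp add: genD_def)
  next
    case False
    then have "sum_list c - 1 < sum_list c" by linarith
    have "genF_step lL g i (genF lL g i) s c = genF_step lL g i (genD i) s c"
    proof (rule genF_step_cong)
      fix j assume "j < length c" "0 < s" "0 < c ! j"
      with admissible_state_infect[OF less.prems \<open>j < length c\<close> \<open>0 < c ! j\<close> \<open>0 < s\<close>] show
        "genF lL g i (s - 1) (c[Suc j := c ! Suc j + 1])
           = genD i (s - 1) (c[Suc j := c ! Suc j + 1])"
        by (intro less.hyps) auto
    next
      fix j assume "j < length c" "0 < c ! j"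
      with admissible_state_recover[OF less.prems this] \<open>sum_list c - 1 < sum_list c\<close> show
        "genF lL g i s (c[j := c ! j - 1]) = genD i s (c[j := c ! j - 1])"
        by (intro less.hyps) auto
    qed
    then show ?thesis
      using False genF_eq_genF_step genD_first_step[OF less.prems False] by simp
  qed
qed

end

section \<open>Infectious-unit types and the matrices P and Phi\<close>

lemma Some_mem_typesS [simp]: "Some (a, b) \<in> typesS h \<longleftrightarrow> 1 \<le> a \<and> 1 \<le> b \<and> a + b \<le> h"
  by (auto simp: typesS_def)

lemma None_mem_typesS [simp]: "None \<in> typesS h"
  by (simp add: typesS_def)

lemma finite_typesS [simp]: "finite (typesS h)"
proof (rule finite_subset)
  show "typesS h \<subseteq> insert None (Some ` ({0..h} \<times> {0..h}))"
    by (auto simp: typesS_def)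
qed auto

definition type_rank :: "(nat \<times> nat) option \<Rightarrow> nat" where
  "type_rank x = (case x of None \<Rightarrow> 0 | Some (a, b) \<Rightarrow> 2 * a + b)"

lemma Pmat_rank_decrease: "Pmat lL g s t \<noteq> 0 \<Longrightarrow> type_rank t < type_rank s"
  by (auto simp: Pmat_def type_rank_def split: option.splits if_splits)

lemma type_rank_le: "s \<in> typesS h \<Longrightarrow> type_rank s \<le> 2 * h"
  by (auto simp: typesS_def type_rank_def)

lemma inverse_on_I_minus_Pmat:
  "inverse_on (typesS h) (\<lambda>s t. idmat s t - Pmat lL g s t)
     (matinv (typesS h) (\<lambda>s t. idmat s t - Pmat lL g s t))"
proof -
  have "matpow (typesS h) (Pmat lL g) (Suc (2 * h)) s t = 0" if "s \<in> typesS h" for s t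
    using matpow_rank_decrease[of "typesS h" "Pmat lL g" type_rank, OF Pmat_rank_decrease that]
      type_rank_le[OF that] by fastforce
  from inverse_on_I_minus_nilpotent[OF finite_typesS this] show ?thesis
    by (subst matinv_eqI) auto
qed

lemma sum_Pmat_row:
  assumes "1 \<le> a" "1 \<le> b" "a + b \<le> h"
  shows "(\<Sum>w\<in>typesS h. Pmat lL g (Some (a, b)) w * f w) =
       (if 1 < a then real a * lL / (real a * lL + g) * f (Some (a - 1, b + 1)) else 0)
     + (if a = 1 then lL / (lL + g) * f None else 0)
     + (if 2 \<le> b then (real b - 1) * g / (real b * (real a * lL + g)) * f (Some (a, b - 1)) else 0)"
proof -
  have "Pmat lL g (Some (a, b)) w =
       (if w = Some (a - 1, b + 1) then if 1 < a then real a * lL / (real a * lL + g) else 0 else 0)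
     + (if w = None then if a = 1 then lL / (lL + g) else 0 else 0)
     + (if w = Some (a, b - 1)
        then if 2 \<le> b then (real b - 1) * g / (real b * (real a * lL + g)) else 0 else 0)" for w
    by (auto simp: Pmat_def)
  moreover have "1 < a \<Longrightarrow> Some (a - 1, b + 1) \<in> typesS h" "2 \<le> b \<Longrightarrow> Some (a, b - 1) \<in> typesS h"
    using assms by auto
  ultimately show ?thesis
    by (simp add: distrib_right sum.distrib if_distrib[of "\<lambda>x. x * _"] cong: if_cong)
qed

definition Phimat_local :: "real \<Rightarrow> real \<Rightarrow> (nat \<times> nat) option \<Rightarrow> (nat \<times> nat) option \<Rightarrow> real" where
  "Phimat_local lL g s t = (case s of None \<Rightarrow> 0
     | Some (a, b) \<Rightarrow>
        (if 1 < a \<and> t = Some (a - 1, b + 1) then real a * lL / (real b * (real a * lL + g)) else 0)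
      + (if a = 1 \<and> t = None then lL / (real b * (lL + g)) else 0))"

definition phi_global :: "real \<Rightarrow> real \<Rightarrow> real \<Rightarrow> (nat \<times> nat) option \<Rightarrow> real" where
  "phi_global lG lL g s =
     (case s of None \<Rightarrow> lG / g | Some (a, b) \<Rightarrow> lG / (real b * (real a * lL + g)))"

lemma Phimat_split:
  "Phimat h lG lL g s t =
     Phimat_local lL g s t + (if t = Some (h - 1, 1) then phi_global lG lL g s else 0)"
  by (cases s) (auto simp: Phimat_def Phimat_local_def phi_global_def)

lemma Phimat_local_single_infective: "Phimat_local lL g s (Some (a, 1)) = 0"
  by (cases s) (auto simp: Phimat_local_def)

lemma sum_Phimat_local_row:
  assumes "1 \<le> a" "1 \<le> b" "a + b \<le> h"
  shows "(\<Sum>w\<in>typesS h. Phimat_local lL g (Some (a, b)) w * f w) =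
       (if 1 < a then real a * lL / (real b * (real a * lL + g)) * f (Some (a - 1, b + 1)) else 0)
     + (if a = 1 then lL / (real b * (lL + g)) * f None else 0)"
proof -
  have "Phimat_local lL g (Some (a, b)) w =
       (if w = Some (a - 1, b + 1)
        then if 1 < a then real a * lL / (real b * (real a * lL + g)) else 0 else 0)
     + (if w = None then if a = 1 then lL / (real b * (lL + g)) else 0 else 0)" for w
    by (auto simp: Phimat_local_def)
  moreover have "1 < a \<Longrightarrow> Some (a - 1, b + 1) \<in> typesS h"
    using assms by auto
  ultimately show ?thesis
    by (simp add: distrib_right sum.distrib if_distrib[of "\<lambda>x. x * _"] cong: if_cong)
qed

lemma phi_global_eq_row_sum:
  assumes "0 \<le> lL" "0 < g" "u \<in> typesS h"
  shows "phi_global lG lL g u = lG / g * (\<Sum>w\<in>typesS h. idmat u w - Pmat lL g u w)"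
proof (cases u)
  case None
  then show ?thesis by (simp add: phi_global_def Pmat_def sum_idmat)
next
  case (Some p)
  then obtain a b where u: "u = Some (a, b)" by (cases p) auto
  with assms have ab: "1 \<le> a" "1 \<le> b" "a + b \<le> h" by auto
  have pos: "0 < real a * lL + g" using assms by (simp add: add_nonneg_pos)
  have "(\<Sum>w\<in>typesS h. Pmat lL g u w) =
      real a * lL / (real a * lL + g) + (real b - 1) * g / (real b * (real a * lL + g))"
    using sum_Pmat_row[OF ab, of lL g "\<lambda>_. 1"] ab u by (cases "a = 1"; cases "b = 1") auto
  also have "\<dots> = 1 - g / (real b * (real a * lL + g))"
  proof -
    define x where "x = real a * lL + g"
    have ax: "real a * lL = x - g" and "0 < x" "0 < real b" using pos ab by (auto simp: x_def)
    then show ?thesis unfolding x_def[symmetric] ax by (simp add: field_simps)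
  qed
  finally show ?thesis
    using u assms by (simp add: phi_global_def sum_subtractf sum_idmat)
qed

section \<open>The within-household part of M\<close>

definition household_type :: "nat \<Rightarrow> nat \<Rightarrow> (nat \<times> nat) option" where
  "household_type a b = (if a = 0 then None else Some (a, b))"

locale household_model =
  fixes h :: nat and lG lL g :: real
  assumes h_ge_2: "2 \<le> h" and lL_nonneg: "0 \<le> lL" and g_pos: "0 < g"
begin

abbreviation types :: "(nat \<times> nat) option set" where
  "types \<equiv> typesS h"

abbreviation new_household :: "(nat \<times> nat) option" where
  "new_household \<equiv> Some (h - 1, 1)"

definition Nmat :: "(nat \<times> nat) option \<Rightarrow> (nat \<times> nat) option \<Rightarrow> real" where
  "Nmat = matinv types (\<lambda>s t. idmat s t - Pmat lL g s t)"

definition Lmat :: "(nat \<times> nat) option \<Rightarrow> (nat \<times> nat) option \<Rightarrow> real" where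
  "Lmat = matmul types Nmat (Phimat_local lL g)"

definition Dloc :: "nat \<Rightarrow> (nat \<times> nat) option \<Rightarrow> real" where
  "Dloc k x = (\<Sum>t\<in>types. matpow types Lmat k x t)"

lemma new_household_mem: "new_household \<in> types"
  using h_ge_2 by simp

lemma Nmat_inverse:
  assumes "s \<in> types" "t \<in> types"
  shows "matmul types (\<lambda>s t. idmat s t - Pmat lL g s t) Nmat s t = idmat s t"
    and "matmul types Nmat (\<lambda>s t. idmat s t - Pmat lL g s t) s t = idmat s t"
  using inverse_on_I_minus_Pmat[of h lL g] assms by (simp_all add: inverse_on_def Nmat_def)

lemma Lmat_first_step:
  assumes "s \<in> types"
  shows "Lmat s t = matmul types (Pmat lL g) Lmat s t + Phimat_local lL g s t"
proof -
  have "matmul types (\<lambda>s t. idmat s t - Pmat lL g s t) Lmat s t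
      = matmul types (matmul types (\<lambda>s t. idmat s t - Pmat lL g s t) Nmat) (Phimat_local lL g) s t"
    by (simp add: Lmat_def matmul_assoc)
  also have "\<dots> = matmul types idmat (Phimat_local lL g) s t"
    using Nmat_inverse(1)[OF assms] by (simp add: matmul_def)
  finally show ?thesis
    using assms by (simp add: matmul_I_minus_left matmul_idmat_left)
qed

lemma Nmat_phi_global:
  assumes "s \<in> types"
  shows "(\<Sum>u\<in>types. Nmat s u * phi_global lG lL g u) = lG / g"
proof -
  have "(\<Sum>u\<in>types. Nmat s u * phi_global lG lL g u)
      = (\<Sum>u\<in>types. Nmat s u * (lG / g * (\<Sum>w\<in>types. idmat u w - Pmat lL g u w)))"
    using phi_global_eq_row_sum[OF lL_nonneg g_pos] by (intro sum.cong) auto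
  also have "\<dots> = lG / g * (\<Sum>w\<in>types. matmul types Nmat (\<lambda>s t. idmat s t - Pmat lL g s t) s w)"
    by (simp add: matmul_def sum_distrib_left mult.left_commute, rule sum.swap)
  also have "\<dots> = lG / g"
    using Nmat_inverse(2)[OF assms] assms by (simp add: sum_idmat)
  finally show ?thesis .
qed

lemma Mmat_split:
  assumes "s \<in> types"
  shows "Mmat h lG lL g s t = Lmat s t + (if t = new_household then lG / g else 0)"
  using Nmat_phi_global[OF assms]
  by (simp add: Mmat_def matmul_def Phimat_split Lmat_def Nmat_def[symmetric]
      distrib_left sum.distrib)

lemma Lmat_new_household: "Lmat s new_household = 0"
  unfolding Lmat_def matmul_def Phimat_local_single_infective by simp

lemma Lmat_None: "Lmat None t = 0"
  using Lmat_first_step[of None t] by (simp add: matmul_def Pmat_def Phimat_local_def)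

lemma Dloc_0: "x \<in> types \<Longrightarrow> Dloc 0 x = 1"
  by (simp add: Dloc_def sum_idmat)

lemma Dloc_Suc: "Dloc (Suc k) x = (\<Sum>u\<in>types. Lmat x u * Dloc k u)"
  unfolding Dloc_def by (simp add: matmul_def sum_distrib_left, rule sum.swap)

lemma Dloc_Suc_None: "Dloc (Suc k) None = 0"
  by (simp add: Dloc_Suc Lmat_None)

lemma Dloc_first_step:
  assumes "x \<in> types"
  shows "Dloc (Suc k) x = (\<Sum>w\<in>types. Pmat lL g x w * Dloc (Suc k) w)
                        + (\<Sum>u\<in>types. Phimat_local lL g x u * Dloc k u)"
proof -
  have "Dloc (Suc k) x = (\<Sum>u\<in>types. (\<Sum>w\<in>types. Pmat lL g x w * Lmat w u) * Dloc k u)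
                       + (\<Sum>u\<in>types. Phimat_local lL g x u * Dloc k u)"
    using Lmat_first_step[OF assms]
    by (simp add: Dloc_Suc matmul_def distrib_right sum.distrib)
  also have "(\<Sum>u\<in>types. (\<Sum>w\<in>types. Pmat lL g x w * Lmat w u) * Dloc k u)
      = (\<Sum>w\<in>types. Pmat lL g x w * Dloc (Suc k) w)"
    by (simp add: Dloc_Suc sum_distrib_left sum_distrib_right mult.assoc, rule sum.swap)
  finally show ?thesis .
qed

sublocale household_generation_means lL g h "\<lambda>k a b. Dloc k (household_type a b)"
proof
  fix a b k :: nat
  show "1 \<le> b \<Longrightarrow> a + b \<le> h \<Longrightarrow> Dloc 0 (household_type a b) = 1"
    by (simp add: Dloc_0 household_type_def)
  show "Dloc (Suc k) (household_type 0 b) = 0"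
    by (simp add: Dloc_Suc_None household_type_def)
  assume ab: "1 \<le> a" "1 \<le> b" "a + b \<le> h"
  then have "Some (a, b) \<in> types" by simp
  from ab have "Dloc (Suc k) (household_type a b) = Dloc (Suc k) (Some (a, b))"
    by (simp add: household_type_def)
  also have "\<dots> =
       (if 1 < a then real a * lL / (real a * lL + g) * Dloc (Suc k) (Some (a - 1, b + 1)) else 0)
     + (if 2 \<le> b
        then (real b - 1) * g / (real b * (real a * lL + g)) * Dloc (Suc k) (Some (a, b - 1)) else 0)
     + ((if 1 < a
         then real a * lL / (real b * (real a * lL + g)) * Dloc k (Some (a - 1, b + 1)) else 0)
     + (if a = 1 then lL / (real b * (lL + g)) * Dloc k None else 0))"
    using ab
    unfolding Dloc_first_step[OF \<open>Some (a, b) \<in> types\<close>] sum_Pmat_row[OF ab]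
      sum_Phimat_local_row[OF ab]
    by (simp add: Dloc_Suc_None)
  finally show "Dloc (Suc k) (household_type a b) =
        real a * lL / (real a * lL + g) * Dloc (Suc k) (household_type (a - 1) (b + 1))
      + real a * lL / (real b * (real a * lL + g)) * Dloc k (household_type (a - 1) (b + 1))
      + (real b - 1) * g / (real b * (real a * lL + g)) * Dloc (Suc k) (household_type a (b - 1))"
    using ab by (cases "a = 1"; cases "b = 1") (simp_all add: household_type_def Dloc_Suc_None)
qed

end

section \<open>Generations of the epidemic\<close>

lemma xgen_0_0: "xgen h muG muf 0 0 = 1"
  by (simp add: xgen.simps)

lemma xgen_Suc_0: "xgen h muG muf (Suc n) 0 = muG * (\<Sum>k<h. xgen h muG muf n k)"
  by (simp add: xgen.simps[of h muG muf "Suc n"])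

lemma xgen_index_below_h:
  assumes "j < h" "muf 0 = 1"
  shows "xgen h muG muf n j = (if j \<le> n then muf j * xgen h muG muf (n - j) 0 else 0)"
  using assms by (cases "j = 0") (simp_all add: xgen.simps[of h muG muf n j])

lemma sum_xgen_convolution:
  assumes "muf 0 = 1"
  shows "(\<Sum>i\<le>n. xgen h muG muf (n - i) 0 * (if i < h then muf i else 0))
       = (\<Sum>j<h. xgen h muG muf n j)"
proof -
  let ?f = "\<lambda>i. muf i * xgen h muG muf (n - i) 0"
  have "(\<Sum>i\<le>n. xgen h muG muf (n - i) 0 * (if i < h then muf i else 0))
      = (\<Sum>i\<le>n. if i \<in> {..<h} then ?f i else 0)"
    by (intro sum.cong) auto
  also have "\<dots> = sum ?f ({..<h} \<inter> {..n})"
    by (subst Int_commute) (rule sum.inter_restrict[symmetric], simp)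
  also have "\<dots> = (\<Sum>j<h. if j \<in> {..n} then ?f j else 0)"
    by (simp add: sum.inter_restrict)
  also have "\<dots> = (\<Sum>j<h. xgen h muG muf n j)"
    using assms by (intro sum.cong) (simp_all add: xgen_index_below_h)
  finally show ?thesis .
qed

context household_model
begin

lemma Dloc_new_household: "Dloc i new_household = (if i < h then mu lL g h i else 0)"
proof (cases "i = 0")
  case True
  then show ?thesis using h_ge_2 Dloc_0[OF new_household_mem] by (simp add: mu_def)
next
  case False
  define c where "c = 1 # replicate (h - 1) (0::nat)"
  have "admissible_state h (h - 1) c"
    using h_ge_2 by (auto simp: admissible_state_def c_def nth_Cons split: nat.splits)
  then have "genF lL g i (h - 1) c = genD i (h - 1) c"
    by (rule genF_eq_genD)
  also have "\<dots> = Dgen i (h - 1) 1 0"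
    unfolding genD_def
    by (simp add: c_def sum_list_replicate sum.lessThan_Suc_shift del: sum.lessThan_Suc)
  also have "\<dots> = Dloc i new_household"
    unfolding Dgen_def using False h_ge_2 by (simp add: household_type_def)
  finally have "genF lL g i (h - 1) c = Dloc i new_household" .
  moreover have "h \<le> i \<Longrightarrow> Dloc i new_household = 0"
    using D_eq_0_if_few_susceptibles[of "h - 1" i 1] h_ge_2 by (simp add: household_type_def)
  ultimately show ?thesis
    using False unfolding mu_def c_def[symmetric] by simp
qed

abbreviation xgen0 :: "nat \<Rightarrow> real" where
  "xgen0 m \<equiv> xgen h (lG / g) (mu lL g h) m 0"

lemma sum_xgen_eq_sum_Dloc:
  "(\<Sum>j<h. xgen h (lG / g) (mu lL g h) n j) = (\<Sum>i\<le>n. xgen0 (n - i) * Dloc i new_household)"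
proof -
  have "(\<Sum>j<h. xgen h (lG / g) (mu lL g h) n j)
      = (\<Sum>i\<le>n. xgen0 (n - i) * (if i < h then mu lL g h i else 0))"
    by (rule sum_xgen_convolution[symmetric]) (simp add: mu_def)
  then show ?thesis by (simp only: Dloc_new_household)
qed

lemma yvec_eq_sum_Lmat_powers:
  "t \<in> types \<Longrightarrow> yvec h lG lL g n t = (\<Sum>i\<le>n. xgen0 (n - i) * matpow types Lmat i new_household t)"
proof (induction n arbitrary: t)
  case 0
  then show ?case by (simp add: xgen_0_0 idmat_def)
next
  case (Suc n)
  define r where "r = (if t = new_household then lG / g else 0)"
  let ?p = "\<lambda>i s. matpow types Lmat i new_household s"
  have "yvec h lG lL g (Suc n) t = (\<Sum>s\<in>types. (\<Sum>i\<le>n. xgen0 (n - i) * ?p i s) * (Lmat s t + r))"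
    using Suc.IH Mmat_split by (auto simp: r_def intro!: sum.cong)
  also have "\<dots> = (\<Sum>s\<in>types. \<Sum>i\<le>n. xgen0 (n - i) * (?p i s * Lmat s t))
      + r * (\<Sum>s\<in>types. \<Sum>i\<le>n. xgen0 (n - i) * ?p i s)"
    by (simp add: algebra_simps sum.distrib sum_distrib_left sum_distrib_right)
  also have "\<dots> = (\<Sum>i\<le>n. xgen0 (n - i) * (\<Sum>s\<in>types. ?p i s * Lmat s t))
      + r * (\<Sum>i\<le>n. xgen0 (n - i) * Dloc i new_household)"
    unfolding Dloc_def sum_distrib_left by (simp only: sum.swap[of _ types])
  also have "\<dots> = (\<Sum>i\<le>n. xgen0 (n - i) * matpow types Lmat (Suc i) new_household t)
      + xgen0 (Suc n) * idmat new_household t"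
    using Suc.prems new_household_mem
    by (simp add: r_def matpow_Suc_right matmul_def xgen_Suc_0 sum_xgen_eq_sum_Dloc idmat_def
        del: matpow.simps(2))
  finally show ?case
    by (simp add: sum.atMost_Suc_shift del: sum.atMost_Suc)
qed

lemma yvec_new_household: "yvec h lG lL g n new_household = xgen0 n"
proof -
  have "matpow types Lmat (Suc i) new_household new_household = 0" for i
    unfolding matpow_Suc_right[OF finite_typesS new_household_mem new_household_mem] matmul_def
      Lmat_new_household by simp
  then show ?thesis
    using yvec_eq_sum_Lmat_powers[OF new_household_mem, of n]
    by (cases n) (simp_all add: sum.atMost_Suc_shift idmat_def del: sum.atMost_Suc)
qed

lemma sum_yvec: "(\<Sum>s\<in>types. yvec h lG lL g n s) = (\<Sum>j<h. xgen h (lG / g) (mu lL g h) n j)"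
proof -
  have "(\<Sum>s\<in>types. yvec h lG lL g n s)
      = (\<Sum>s\<in>types. \<Sum>i\<le>n. xgen0 (n - i) * matpow types Lmat i new_household s)"
    using yvec_eq_sum_Lmat_powers by simp
  also have "\<dots> = (\<Sum>i\<le>n. xgen0 (n - i) * Dloc i new_household)"
    unfolding Dloc_def sum_distrib_left by (rule sum.swap)
  finally show ?thesis by (simp only: sum_xgen_eq_sum_Dloc)
qed

end

theorem lemma3p1:
  fixes h :: nat and lG lL g :: real
  assumes "2 \<le> h" and "0 < lG" and "0 < lL" and "0 < g"
  shows "\<forall>n. yvec h lG lL g n (Some (h - 1, 1)) = xgen h (lG / g) (mu lL g h) n 0
          \<and> (\<Sum>s\<in>typesS h. yvec h lG lL g n s) = (\<Sum>j<h. xgen h (lG / g) (mu lL g h) n j)"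
proof -
  interpret household_model h lG lL g
    using assms by unfold_locales auto
  show ?thesis using yvec_new_household sum_yvec by blast
qed

end
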